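(* Let $(S,\le,\to,|\cdot|,\Pr)$ be a closed stochastic well-structured transition system, let $T\subseteq S$ be upward-closed, and let $X_0,X_1,\dots$ be an execution of the system. Let $\tau$ be the first time at which $X_\tau\in T$ or $X_\tau\notin\mathrm{Pred}^*(T)$. Then there is a constant $k$ (independent of $X_0$) such that $\mathbb{E}[\tau]=O(|X_0|^k)$, where the implied constant is also independent of $X_0$.
   Context: A quasi-order is a reflexive, transitive relation. A well-quasi-order (wqo) $\le$ on a set $S$ is a quasi-order such that every infinite sequence $x_0,x_1,\dots$ in $S$ has indices $i<j$ with $x_i\le x_j$. A set $T\subseteq S$ is upward-closed if $x\in T$ and $x\le y$ imply $y\in T$. A well-structured transition system (WSTS) $(S,\le,\to)$ is a set $S$ of configurations with a wqo $\le$ and a binary transition relation $\to$ that is compatible with $\le$: whenever $s\to s'$ and $s\le t$, there exists $t'$ with $t\to t'$ and $s'\le t'$. A stochastic WSTS (SWSTS) $(S,\le,\to,|\cdot|,\Pr)$ is a WSTS together with a function assigning each configuration $s$ a positive weight $|s|$ and a transition probability $\Pr[s\to s']$ to each transition, making an execution $X_0,X_1,\dots$ a Markov chain with $\Pr[X_{i+1}=s'\mid X_i=s]=\Pr[s\to s']$; it is required (polynomial transition probabilities) that for each transition $s\to s'$ there are constants $k_0\ge 0$, $c_0>0$ such that for every configuration $t\ge s$, $\Pr[X_{i+1}\ge s'\mid X_i=t]\ge c_0|t|^{-k_0}$. The SWSTS is closed if $s\to s'$ implies $|s|=|s'|$. $\mathrm{Pred}^*(T)$ is the set of configurations from which some element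 of $T$ is reachable by a finite (possibly empty) sequence of transitions. *)

theory Defs
  imports "HOL-Probability.Probability"
begin

definition quasi_order :: "('a \<Rightarrow> 'a \<Rightarrow> bool) \<Rightarrow> bool" where
  "quasi_order le \<longleftrightarrow> (\<forall>x. le x x) \<and> (\<forall>x y z. le x y \<longrightarrow> le y z \<longrightarrow> le x z)"

definition wqo :: "('a \<Rightarrow> 'a \<Rightarrow> bool) \<Rightarrow> bool" where
  "wqo le \<longleftrightarrow> quasi_order le \<and> (\<forall>f :: nat \<Rightarrow> 'a. \<exists>i j. i < j \<and> le (f i) (f j))"

definition upward_closed :: "('a \<Rightarrow> 'a \<Rightarrow> bool) \<Rightarrow> 'a set \<Rightarrow> bool" where
  "upward_closed le T \<longleftrightarrow> (\<forall>x y. x \<in> T \<longrightarrow> le x y \<longrightarrow> y \<in> T)"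

definition compatible :: "('a \<Rightarrow> 'a \<Rightarrow> bool) \<Rightarrow> ('a \<Rightarrow> 'a \<Rightarrow> bool) \<Rightarrow> bool" where
  "compatible le tr \<longleftrightarrow>
     (\<forall>s s' t. tr s s' \<longrightarrow> le s t \<longrightarrow> (\<exists>t'. tr t t' \<and> le s' t'))"

definition wsts :: "('a \<Rightarrow> 'a \<Rightarrow> bool) \<Rightarrow> ('a \<Rightarrow> 'a \<Rightarrow> bool) \<Rightarrow> bool" where
  "wsts le tr \<longleftrightarrow> wqo le \<and> compatible le tr"

text \<open>Stochastic WSTS: weights are positive integers (sizes); the Markov kernel
  K gives the distribution of the next configuration and only moves along
  transitions; polynomial transition probabilities.\<close>

definition swsts ::
  "('a \<Rightarrow> 'a \<Rightarrow> bool) \<Rightarrow> ('a \<Rightarrow> 'a \<Rightarrow> bool) \<Rightarrow> ('a \<Rightarrow> nat) \<Rightarrow> ('a \<Rightarrow> 'a pmf) \<Rightarrow> bool" where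
  "swsts le tr w K \<longleftrightarrow>
     wsts le tr \<and>
     (\<forall>s. w s > 0) \<and>
     (\<forall>s. set_pmf (K s) \<subseteq> {s'. tr s s'}) \<and>
     (\<forall>s s'. tr s s' \<longrightarrow>
        (\<exists>k0 c0 :: real. k0 \<ge> 0 \<and> c0 > 0 \<and>
           (\<forall>t. le s t \<longrightarrow>
              measure_pmf.prob (K t) {u. le s' u} \<ge> c0 * real (w t) powr (- k0))))"

definition closed_swsts ::
  "('a \<Rightarrow> 'a \<Rightarrow> bool) \<Rightarrow> ('a \<Rightarrow> 'a \<Rightarrow> bool) \<Rightarrow> ('a \<Rightarrow> nat) \<Rightarrow> ('a \<Rightarrow> 'a pmf) \<Rightarrow> bool" where
  "closed_swsts le tr w K \<longleftrightarrow> swsts le tr w K \<and> (\<forall>s s'. tr s s' \<longrightarrow> w s = w s')"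

definition Pred_star :: "('a \<Rightarrow> 'a \<Rightarrow> bool) \<Rightarrow> 'a set \<Rightarrow> 'a set" where
  "Pred_star tr T = {s. \<exists>t\<in>T. tr\<^sup>*\<^sup>* s t}"

text \<open>Distribution of the first n+1 states [X_0, ..., X_n] of an
  execution started in s.\<close>

fun traj :: "('a \<Rightarrow> 'a pmf) \<Rightarrow> nat \<Rightarrow> 'a \<Rightarrow> 'a list pmf" where
  "traj K 0 s = return_pmf [s]"
| "traj K (Suc n) s = bind_pmf (K s) (\<lambda>s'. map_pmf (\<lambda>xs. s # xs) (traj K n s'))"

text \<open>Stopping time: first index \<tau> with X_\<tau> \<in> T or
  X_\<tau> \<notin> Pred*(T). Hence \<tau> > n iff X_0..X_n all lie in
  Pred*(T) - T. Its expectation is given by the tail-sum formula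
  E[\<tau>] = \<Sum>n. Pr[\<tau> > n] (in ennreal, possibly infinite).\<close>

definition tau_gt :: "('a \<Rightarrow> 'a \<Rightarrow> bool) \<Rightarrow> 'a set \<Rightarrow> 'a list \<Rightarrow> bool" where
  "tau_gt tr T xs \<longleftrightarrow> (\<forall>x\<in>set xs. x \<notin> T \<and> x \<in> Pred_star tr T)"

definition expected_tau ::
  "('a \<Rightarrow> 'a \<Rightarrow> bool) \<Rightarrow> ('a \<Rightarrow> 'a pmf) \<Rightarrow> 'a set \<Rightarrow> 'a \<Rightarrow> ennreal" where
  "expected_tau tr K T s =
     (\<Sum>n. ennreal (measure_pmf.prob (traj K n s) {xs. tau_gt tr T xs}))"

end

theory Submission
  imports Defs
begin

text \<open>Let G = Pred*(T) - T be the set of states in which the execution has not yet stopped.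
  Since the order is a wqo, Pred*(T) has a finite basis B. From each b in B there is a path
  to T, and following it backwards, the polynomial transition probabilities show that from
  every s above b the chain leaves G within the length of the path with probability at least
  c/|s|^k; taking the worst case over the finite basis makes L, c and k uniform on G.
  Closedness keeps the weight constant along executions, so by the Markov property
  Pr[\<tau> > jL] \<le> (1 - c/|s|^k)^j, and summing this geometric tail gives E[\<tau>] \<le> L |s|^k / c.\<close>

lemma measure_pmf_prob_bind:
  "measure_pmf.prob (bind_pmf M f) A = (\<integral>x. measure_pmf.prob (f x) A \<partial>M)"
  unfolding measure_pmf_bind
  by (rule measure_pmf.measure_bind[where N="count_space UNIV"])
    (auto simp: measure_pmf_in_subprob_algebra)

lemma integral_mono_pmf:
  fixes f g :: "'a \<Rightarrow> real" and M :: "'a pmf"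
  assumes "integrable M f" "integrable M g" "\<And>x. x \<in> set_pmf M \<Longrightarrow> f x \<le> g x"
  shows "(\<integral>x. f x \<partial>M) \<le> (\<integral>x. g x \<partial>M)"
  using assms by (intro integral_mono_AE) (auto simp: AE_measure_pmf_iff)

text \<open>For G = Pred*(T) - T, stay_prob K G n s is Pr[\<tau> > n] for the execution started in s.\<close>

definition stay_prob :: "('a \<Rightarrow> 'a pmf) \<Rightarrow> 'a set \<Rightarrow> nat \<Rightarrow> 'a \<Rightarrow> real" where
  "stay_prob K G n s = measure_pmf.prob (traj K n s) {xs. set xs \<subseteq> G}"

lemma stay_prob_nonneg: "0 \<le> stay_prob K G n s"
  by (simp add: stay_prob_def)

lemma stay_prob_le_1: "stay_prob K G n s \<le> 1"
  by (simp add: stay_prob_def)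

lemma integrable_stay_prob: "integrable (measure_pmf M) (stay_prob K G n)"
  by (intro measure_pmf.integrable_const_bound[where B=1]) (auto simp: stay_prob_nonneg stay_prob_le_1)

lemma stay_prob_0: "stay_prob K G 0 s = indicator G s"
  by (simp add: stay_prob_def indicator_def)

lemma stay_prob_Suc:
  "stay_prob K G (Suc n) s = indicator G s * (\<integral>u. stay_prob K G n u \<partial>K s)"
  by (cases "s \<in> G") (simp_all add: stay_prob_def measure_pmf_prob_bind vimage_def)

lemma stay_prob_outside: "s \<notin> G \<Longrightarrow> stay_prob K G n s = 0"
  by (cases n) (simp_all add: stay_prob_0 stay_prob_Suc)

lemma stay_prob_Suc_le_integral:
  "stay_prob K G (Suc n) s \<le> (\<integral>u. stay_prob K G n u \<partial>K s)"
  using integral_nonneg_AE[of "\<lambda>u. stay_prob K G n u" "K s"]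
  by (simp add: stay_prob_Suc indicator_def stay_prob_nonneg)

lemma decseq_stay_prob: "decseq (\<lambda>n. stay_prob K G n s)"
proof -
  have "stay_prob K G (Suc n) s \<le> stay_prob K G n s" for n s
  proof (induction n arbitrary: s)
    case 0
    show ?case
      by (cases "s \<in> G") (simp_all add: stay_prob_0 stay_prob_outside stay_prob_le_1)
  next
    case (Suc n)
    have "(\<integral>u. stay_prob K G (Suc n) u \<partial>K s) \<le> (\<integral>u. stay_prob K G n u \<partial>K s)"
      by (intro integral_mono_pmf integrable_stay_prob Suc)
    then show ?case
      by (simp add: stay_prob_Suc[of K G "Suc n"] stay_prob_Suc[of K G n] indicator_def)
  qed
  then show ?thesis
    by (intro decseq_SucI)
qed

lemma stay_prob_Suc_le_escape:
  assumes "0 \<le> a" and "\<And>u. u \<in> set_pmf (K s) \<Longrightarrow> u \<in> A \<Longrightarrow> stay_prob K G n u \<le> 1 - a"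
  shows "stay_prob K G (Suc n) s \<le> 1 - a * measure_pmf.prob (K s) A"
proof -
  have "stay_prob K G (Suc n) s \<le> (\<integral>u. stay_prob K G n u \<partial>K s)"
    by (rule stay_prob_Suc_le_integral)
  also have "\<dots> \<le> (\<integral>u. 1 - a * indicator A u \<partial>K s)"
  proof (rule integral_mono_pmf)
    show "integrable (K s) (\<lambda>u. 1 - a * indicator A u)"
      by (rule measure_pmf.integrable_const_bound[where B="1 + \<bar>a\<bar>"]) (auto simp: indicator_def)
  qed (use assms in \<open>auto simp: integrable_stay_prob stay_prob_le_1 indicator_def\<close>)
  also have "\<dots> = 1 - a * measure_pmf.prob (K s) A"
    by (subst Bochner_Integration.integral_diff)
      (auto simp: less_top[symmetric])
  finally show ?thesis .
qed

lemma stay_prob_add_le: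
  assumes invariant: "\<And>u. u \<in> C \<Longrightarrow> set_pmf (K u) \<subseteq> C"
    and "0 \<le> M" and bound: "\<And>u. u \<in> C \<Longrightarrow> stay_prob K G n u \<le> M"
    and "s \<in> C"
  shows "stay_prob K G (m + n) s \<le> M * stay_prob K G m s"
  using \<open>s \<in> C\<close>
proof (induction m arbitrary: s)
  case 0
  then show ?case
    using bound by (cases "s \<in> G") (simp_all add: stay_prob_0 stay_prob_outside)
next
  case (Suc m)
  have "(\<integral>u. stay_prob K G (m + n) u \<partial>K s) \<le> (\<integral>u. M * stay_prob K G m u \<partial>K s)"
    using Suc invariant by (intro integral_mono_pmf) (auto simp: integrable_stay_prob)
  then show ?case
    by (simp add: stay_prob_Suc indicator_def)
qed

lemma stay_prob_mult_le_power:
  assumes invariant: "\<And>u. u \<in> C \<Longrightarrow> set_pmf (K u) \<subseteq> C"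
    and "q \<le> 1" and bound: "\<And>u. u \<in> C \<Longrightarrow> stay_prob K G L u \<le> 1 - q"
    and "s \<in> C"
  shows "stay_prob K G (j * L) s \<le> (1 - q) ^ j"
  using \<open>s \<in> C\<close>
proof (induction j arbitrary: s)
  case 0
  then show ?case
    by (simp add: stay_prob_le_1)
next
  case (Suc j)
  have "stay_prob K G (L + j * L) s \<le> (1 - q) ^ j * stay_prob K G L s"
    using \<open>q \<le> 1\<close> by (intro stay_prob_add_le[OF invariant _ Suc.IH Suc.prems]) simp_all
  also have "\<dots> \<le> (1 - q) ^ j * (1 - q)"
    using \<open>q \<le> 1\<close> by (intro mult_left_mono bound Suc.prems) simp
  finally show ?case
    by (simp add: mult.commute)
qed

lemma suminf_stay_prob_le:
  assumes invariant: "\<And>u. u \<in> C \<Longrightarrow> set_pmf (K u) \<subseteq> C"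
    and "0 < L" "0 < q" "q \<le> 1" and bound: "\<And>u. u \<in> C \<Longrightarrow> stay_prob K G L u \<le> 1 - q"
    and "s \<in> C"
  shows "(\<Sum>n. ennreal (stay_prob K G n s)) \<le> ennreal (L / q)"
proof (rule suminf_le_const)
  fix N
  have block: "stay_prob K G n s \<le> (1 - q) ^ j" if "j * L \<le> n" for j n
    using decseqD[OF decseq_stay_prob that]
      stay_prob_mult_le_power[OF invariant \<open>q \<le> 1\<close> bound \<open>s \<in> C\<close>] by (rule order_trans)
  have "(\<Sum>n<N. stay_prob K G n s) \<le> (\<Sum>n<N * L. stay_prob K G n s)"
    using \<open>0 < L\<close> by (intro sum_mono2) (auto simp: stay_prob_nonneg)
  also have "\<dots> = (\<Sum>j<N. \<Sum>n\<in>{j * L..<j * L + L}. stay_prob K G n s)"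
    by (rule sum.nat_group[symmetric])
  also have "\<dots> \<le> (\<Sum>j<N. \<Sum>n\<in>{j * L..<j * L + L}. (1 - q) ^ j)"
    by (intro sum_mono block) simp
  also have "\<dots> = L * (\<Sum>j<N. (1 - q) ^ j)"
    by (simp add: sum_distrib_left)
  also have "\<dots> = L * ((1 - (1 - q) ^ N) / q)"
    using \<open>0 < q\<close> by (simp add: sum_gp_strict)
  also have "\<dots> \<le> L / q"
    using \<open>0 < q\<close> \<open>q \<le> 1\<close> by (simp add: field_simps)
  finally show "(\<Sum>n<N. ennreal (stay_prob K G n s)) \<le> ennreal (L / q)"
    by (simp add: stay_prob_nonneg ennreal_leI)
qed simp

definition escapes_poly :: "('a \<Rightarrow> 'a pmf) \<Rightarrow> 'a set \<Rightarrow> ('a \<Rightarrow> nat) \<Rightarrow> 'a set \<Rightarrow> bool" where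
  "escapes_poly K G w A \<longleftrightarrow>
     (\<exists>n c k. 0 < c \<and> (\<forall>s\<in>A. stay_prob K G n s \<le> 1 - c / real (w s) ^ k))"

lemma escapes_poly_subset:
  "A \<subseteq> B \<Longrightarrow> escapes_poly K G w B \<Longrightarrow> escapes_poly K G w A"
  unfolding escapes_poly_def by blast

lemma escapes_poly_outside: "escapes_poly K G w (- G)"
  unfolding escapes_poly_def
  by (intro exI[of _ 0] exI[of _ 1]) (auto simp: stay_prob_outside)

lemma escapes_poly_Un:
  assumes wpos: "\<And>s. 0 < w s"
    and "escapes_poly K G w A" "escapes_poly K G w B"
  shows "escapes_poly K G w (A \<union> B)"
proof -
  have weaken: "stay_prob K G n' s \<le> 1 - c' / real (w s) ^ k'"
    if "stay_prob K G n s \<le> 1 - c / real (w s) ^ k" "n \<le> n'" "0 < c'" "c' \<le> c" "k \<le> k'"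
    for n c k n' c' k' s
  proof -
    have "c' / real (w s) ^ k' \<le> c / real (w s) ^ k"
      using that wpos[of s] by (intro frac_le power_increasing) auto
    then show ?thesis
      using decseqD[OF decseq_stay_prob[of K G s] \<open>n \<le> n'\<close>] that(1) by linarith
  qed
  obtain n1 c1 k1 where "0 < c1" "\<forall>s\<in>A. stay_prob K G n1 s \<le> 1 - c1 / real (w s) ^ k1"
    using \<open>escapes_poly K G w A\<close> by (auto simp: escapes_poly_def)
  moreover obtain n2 c2 k2 where "0 < c2" "\<forall>s\<in>B. stay_prob K G n2 s \<le> 1 - c2 / real (w s) ^ k2"
    using \<open>escapes_poly K G w B\<close> by (auto simp: escapes_poly_def)
  ultimately have "\<forall>s\<in>A \<union> B. stay_prob K G (max n1 n2) s
      \<le> 1 - min c1 c2 / real (w s) ^ max k1 k2"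
    by (auto intro: weaken)
  with \<open>0 < c1\<close> \<open>0 < c2\<close> show ?thesis
    unfolding escapes_poly_def by (intro exI[of _ "max n1 n2"] exI[of _ "min c1 c2"] exI[of _ "max k1 k2"]) auto
qed

lemma escapes_poly_UN:
  assumes "finite I" "\<And>s. 0 < w s" "\<And>i. i \<in> I \<Longrightarrow> escapes_poly K G w (A i)"
  shows "escapes_poly K G w (\<Union>i\<in>I. A i)"
  using assms
proof (induction I rule: finite_induct)
  case empty
  show ?case
    by (auto simp: escapes_poly_def intro: exI[of _ 1])
next
  case (insert i I)
  then show ?case
    by (simp add: escapes_poly_Un)
qed

lemma suminf_stay_prob_poly_bound:
  assumes "escapes_poly K G w UNIV" and wpos: "\<And>s. 0 < w s"
    and weight_invariant: "\<And>s u. u \<in> set_pmf (K s) \<Longrightarrow> w u = w s"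
  shows "\<exists>k C. \<forall>s. (\<Sum>n. ennreal (stay_prob K G n s)) \<le> ennreal (C * real (w s) ^ k)"
proof -
  obtain n c k where "0 < c" and bound: "\<And>s. stay_prob K G n s \<le> 1 - c / real (w s) ^ k"
    using assms(1) by (auto simp: escapes_poly_def)
  \<comment> \<open>the bound also holds after Suc n steps, which gives a positive block length\<close>
  have "(\<Sum>n. ennreal (stay_prob K G n s)) \<le> ennreal (Suc n / c * real (w s) ^ k)" for s
  proof -
    define q where "q = c / real (w s) ^ k"
    have "0 < q"
      using \<open>0 < c\<close> wpos[of s] by (simp add: q_def)
    have "q \<le> 1"
      using bound[of s] stay_prob_nonneg[of K G n s] by (simp add: q_def)
    have "stay_prob K G (Suc n) u \<le> 1 - q" if "u \<in> {u. w u = w s}" for u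
      using decseqD[OF decseq_stay_prob[of K G u], of n "Suc n"] bound[of u] that by (simp add: q_def)
    then have "(\<Sum>n. ennreal (stay_prob K G n s)) \<le> ennreal (Suc n / q)"
      using weight_invariant \<open>0 < q\<close> \<open>q \<le> 1\<close>
      by (intro suminf_stay_prob_le[where C="{u. w u = w s}"]) auto
    also have "Suc n / q = Suc n / c * real (w s) ^ k"
      using \<open>0 < c\<close> by (simp add: q_def)
    finally show ?thesis .
  qed
  then show ?thesis
    by blast
qed

lemma wqo_finite_basis:
  assumes "wqo le"
  shows "\<exists>B. finite B \<and> B \<subseteq> U \<and> (\<forall>x\<in>U. \<exists>b\<in>B. le b x)"
proof (rule ccontr)
  \<comment> \<open>otherwise, greedily picking elements not above any earlier pick yields a bad sequence\<close>
  assume no_basis: "\<not> ?thesis"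
  define pick where "pick F = (SOME x. x \<in> U \<and> (\<forall>b\<in>F. \<not> le b x))" for F
  have pick: "pick F \<in> U \<and> (\<forall>b\<in>F. \<not> le b (pick F))" if "finite F" "F \<subseteq> U" for F
  proof -
    have "\<exists>x. x \<in> U \<and> (\<forall>b\<in>F. \<not> le b x)"
      using no_basis that by auto
    then show ?thesis
      unfolding pick_def by (rule someI_ex)
  qed
  define prefix where "prefix n = ((\<lambda>xs. pick (set xs) # xs) ^^ n) []" for n
  define f where "f n = pick (set (prefix n))" for n
  have prefix_0: "prefix 0 = []"
    by (simp add: prefix_def)
  have prefix_Suc: "prefix (Suc n) = f n # prefix n" for n
    by (simp add: prefix_def f_def)
  have prefix_in: "set (prefix n) \<subseteq> U" for n
    by (induction n) (simp_all add: prefix_0 prefix_Suc f_def pick)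
  have "f i \<in> set (prefix j)" if "i < j" for i j
    using that by (induction j) (auto simp: prefix_Suc less_Suc_eq)
  moreover have "\<not> le b (f j)" if "b \<in> set (prefix j)" for b j
    using pick[OF _ prefix_in] that by (simp add: f_def)
  moreover obtain i j where "i < j" "le (f i) (f j)"
    using assms unfolding wqo_def by blast
  ultimately show False
    by blast
qed

lemma powr_neg_ge_inverse_power_ceiling:
  fixes x k :: real
  assumes "1 \<le> x"
  shows "1 / x ^ nat \<lceil>k\<rceil> \<le> x powr - k"
proof -
  have "x powr k \<le> x powr real (nat \<lceil>k\<rceil>)"
    using assms by (intro powr_mono) linarith+
  also have "\<dots> = x ^ nat \<lceil>k\<rceil>"
    using assms by (simp add: powr_realpow)
  finally show ?thesis
    using assms by (simp add: powr_minus divide_inverse le_imp_inverse_le)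
qed

lemma swsts_transition_prob_ge:
  assumes "swsts le tr w K" "tr s s'"
  shows "\<exists>c k. 0 < c \<and>
    (\<forall>t. le s t \<longrightarrow> c / real (w t) ^ k \<le> measure_pmf.prob (K t) {u. le s' u})"
proof -
  obtain k0 c0 :: real where "0 < c0"
    and prob_ge: "\<And>t. le s t \<Longrightarrow> c0 * real (w t) powr (- k0) \<le> measure_pmf.prob (K t) {u. le s' u}"
    using assms unfolding swsts_def by blast
  have "c0 / real (w t) ^ nat \<lceil>k0\<rceil> \<le> measure_pmf.prob (K t) {u. le s' u}" if "le s t" for t
  proof -
    have "1 \<le> real (w t)"
      using assms(1) by (simp add: swsts_def Suc_le_eq)
    then have "c0 * (1 / real (w t) ^ nat \<lceil>k0\<rceil>) \<le> c0 * real (w t) powr (- k0)"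
      using \<open>0 < c0\<close> by (intro mult_left_mono powr_neg_ge_inverse_power_ceiling) simp_all
    then have "c0 / real (w t) ^ nat \<lceil>k0\<rceil> \<le> c0 * real (w t) powr (- k0)"
      by simp
    also have "\<dots> \<le> measure_pmf.prob (K t) {u. le s' u}"
      using prob_ge[OF that] .
    finally show ?thesis .
  qed
  with \<open>0 < c0\<close> show ?thesis
    by blast
qed

lemma closed_swsts_swsts: "closed_swsts le tr w K \<Longrightarrow> swsts le tr w K"
  by (simp add: closed_swsts_def)

lemma closed_swsts_wqo: "closed_swsts le tr w K \<Longrightarrow> wqo le"
  by (simp add: closed_swsts_def swsts_def wsts_def)

lemma closed_swsts_weight_pos: "closed_swsts le tr w K \<Longrightarrow> 0 < w s"
  by (simp add: closed_swsts_def swsts_def)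

lemma closed_swsts_weight_invariant:
  assumes "closed_swsts le tr w K" "u \<in> set_pmf (K s)"
  shows "w u = w s"
proof -
  have "tr s u"
    using assms unfolding closed_swsts_def swsts_def by blast
  then show ?thesis
    using assms(1) unfolding closed_swsts_def by simp
qed

lemma closed_swsts_escapes_poly_step:
  assumes "closed_swsts le tr w K" "tr y z" "escapes_poly K G w {s. le z s}"
  shows "escapes_poly K G w {s. le y s}"
proof -
  obtain n c k where "0 < c" and bound_z: "\<And>u. le z u \<Longrightarrow> stay_prob K G n u \<le> 1 - c / real (w u) ^ k"
    using assms(3) by (auto simp: escapes_poly_def)
  obtain c0 k0 where "0 < c0"
    and prob_ge: "\<And>t. le y t \<Longrightarrow> c0 / real (w t) ^ k0 \<le> measure_pmf.prob (K t) {u. le z u}"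
    using swsts_transition_prob_ge[OF closed_swsts_swsts[OF assms(1)] assms(2)] by blast
  have "stay_prob K G (Suc n) s \<le> 1 - (c * c0) / real (w s) ^ (k + k0)" if "le y s" for s
  proof -
    have "stay_prob K G (Suc n) s \<le> 1 - c / real (w s) ^ k * measure_pmf.prob (K s) {u. le z u}"
    proof (rule stay_prob_Suc_le_escape)
      show "0 \<le> c / real (w s) ^ k"
        using \<open>0 < c\<close> by simp
      fix u
      assume "u \<in> set_pmf (K s)" "u \<in> {u. le z u}"
      then show "stay_prob K G n u \<le> 1 - c / real (w s) ^ k"
        using bound_z[of u] closed_swsts_weight_invariant[OF assms(1)] by simp
    qed
    also have "\<dots> \<le> 1 - c / real (w s) ^ k * (c0 / real (w s) ^ k0)"
      using prob_ge[OF that] \<open>0 < c\<close> by (intro diff_left_mono mult_left_mono) auto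
    also have "\<dots> = 1 - (c * c0) / real (w s) ^ (k + k0)"
      by (simp add: power_add)
    finally show ?thesis .
  qed
  with \<open>0 < c\<close> \<open>0 < c0\<close> show ?thesis
    unfolding escapes_poly_def by (intro exI[of _ "Suc n"] exI[of _ "c * c0"] exI[of _ "k + k0"]) auto
qed

lemma closed_swsts_escapes_poly_above:
  assumes "closed_swsts le tr w K" "upward_closed le T" "tr\<^sup>*\<^sup>* s t" "t \<in> T"
  shows "escapes_poly K (Pred_star tr T - T) w {u. le s u}"
  using assms(3)
proof (induction rule: converse_rtranclp_induct)
  case base
  have "{u. le t u} \<subseteq> - (Pred_star tr T - T)"
    using assms(2,4) by (auto simp: upward_closed_def)
  then show ?case
    using escapes_poly_outside by (rule escapes_poly_subset)
next
  case (step y z)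
  show ?case
    by (rule closed_swsts_escapes_poly_step[OF assms(1) step.hyps(1) step.IH])
qed

lemma closed_swsts_escapes_poly:
  assumes "closed_swsts le tr w K" "upward_closed le T"
  shows "escapes_poly K (Pred_star tr T - T) w UNIV"
proof -
  let ?G = "Pred_star tr T - T"
  note wpos = closed_swsts_weight_pos[OF assms(1)]
  obtain B where "finite B" "B \<subseteq> Pred_star tr T" and basis: "\<forall>x\<in>Pred_star tr T. \<exists>b\<in>B. le b x"
    using wqo_finite_basis[OF closed_swsts_wqo[OF assms(1)], of "Pred_star tr T"] by blast
  have above_basis: "escapes_poly K ?G w {u. le b u}" if "b \<in> B" for b
  proof -
    obtain t where "tr\<^sup>*\<^sup>* b t" "t \<in> T"
      using \<open>B \<subseteq> Pred_star tr T\<close> \<open>b \<in> B\<close> unfolding Pred_star_def by blast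
    then show ?thesis
      by (rule closed_swsts_escapes_poly_above[OF assms])
  qed
  have "escapes_poly K ?G w (\<Union>b\<in>B. {u. le b u})"
    using escapes_poly_UN[OF \<open>finite B\<close> wpos above_basis] .
  moreover have "?G \<subseteq> (\<Union>b\<in>B. {u. le b u})"
    using basis by blast
  ultimately have "escapes_poly K ?G w ?G"
    by (rule escapes_poly_subset[rotated])
  then have "escapes_poly K ?G w (?G \<union> - ?G)"
    by (rule escapes_poly_Un[OF wpos _ escapes_poly_outside])
  then show ?thesis
    by (simp only: Compl_partition)
qed

theorem theorem4:
  fixes le tr :: "'a \<Rightarrow> 'a \<Rightarrow> bool" and w :: "'a \<Rightarrow> nat" and K :: "'a \<Rightarrow> 'a pmf"
    and T :: "'a set"
  assumes "closed_swsts le tr w K"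
    and "upward_closed le T"
  shows "\<exists>(k::nat) (C::real). \<forall>s. expected_tau tr K T s \<le> ennreal (C * real (w s) ^ k)"
proof -
  have "{xs. tau_gt tr T xs} = {xs. set xs \<subseteq> Pred_star tr T - T}"
    by (auto simp: tau_gt_def)
  then have "expected_tau tr K T s = (\<Sum>n. ennreal (stay_prob K (Pred_star tr T - T) n s))" for s
    by (simp add: expected_tau_def stay_prob_def)
  moreover have "\<exists>k C. \<forall>s. (\<Sum>n. ennreal (stay_prob K (Pred_star tr T - T) n s)) \<le> ennreal (C * real (w s) ^ k)"
    using closed_swsts_weight_pos[OF assms(1)] closed_swsts_weight_invariant[OF assms(1)]
    by (intro suminf_stay_prob_poly_bound[OF closed_swsts_escapes_poly[OF assms]])
  ultimately show ?thesis
    by simp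
qed

end
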